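(* CTL*$_{cd}$ is invariant under cycle-bisimulation: if $\mathcal K_1=(AP,W_1,R_1,L_1,w_{I,1})$ and $\mathcal K_2=(AP,W_2,R_2,L_2,w_{I,2})$ are Kripke structures and $B\subseteq W_1\times W_2$ is a cycle-bisimulation relation, then for every CTL*$_{cd}$ state formula $\varphi$ and every $(w_1,w_2)\in B$ we have $\mathcal K_1,w_1\models\varphi$ iff $\mathcal K_2,w_2\models\varphi$; in particular $\mathcal K_1\models\varphi$ iff $\mathcal K_2\models\varphi$.
   Context: A Kripke structure over a finite set $AP$ of atomic propositions is a tuple $\mathcal K=(AP,W,R,L,w_I)$ where $W$ is a countable non-empty set of worlds, $w_I\in W$ is the initial world, $R\subseteq W\times W$ is a left-total transition relation (every world has at least one $R$-successor), and $L:W\to 2^{AP}$ is a labelling function. A path is an infinite sequence $\pi=\pi_0\pi_1\cdots$ of worlds with $(\pi_i,\pi_{i+1})\in R$ for all $i\in\mathbb N$; $\mathrm{Pth}(w)$ is the set of paths with $\pi_0=w$. A path $\pi$ is a cycle if for every $i\in\mathbb N$ there is $j>i$ with $\pi_j=\pi_0$ (i.e. $\pi_0$ occurs infinitely often in $\pi$); $\mathrm{Cyc}(w)$ is the set of cycles with $\pi_0=w$. Syntax of CTL*$_{cd}$: state formulas $\varphi::=p\mid\neg\varphi\mid\varphi\wedge\varphi\mid\varphi\vee\varphi\mid \mathsf E\psi\mid\mathsf A\psi\mid\mathsf E^{c}\psi\mid\mathsf A^{c}\psi$ with $p\in AP$; path formulas $\psi::=\varphi\mid\neg\psi\mid\psi\wedge\psi\mid\psi\vee\psi\mid\mathsf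 X\psi\mid\psi\,\mathsf U\,\psi$. Semantics: $\mathcal K,w\models p$ iff $p\in L(w)$; Boolean connectives as usual; $\mathcal K,w\models\mathsf E\psi$ iff some $\pi\in\mathrm{Pth}(w)$ has $\mathcal K,\pi,0\models\psi$; $\mathcal K,w\models\mathsf A\psi$ iff every $\pi\in\mathrm{Pth}(w)$ has $\mathcal K,\pi,0\models\psi$; $\mathcal K,w\models\mathsf E^{c}\psi$ iff some $\pi\in\mathrm{Cyc}(w)$ has $\mathcal K,\pi,0\models\psi$; $\mathcal K,w\models\mathsf A^{c}\psi$ iff every $\pi\in\mathrm{Cyc}(w)$ has $\mathcal K,\pi,0\models\psi$. For paths: $\mathcal K,\pi,i\models\varphi$ (state formula) iff $\mathcal K,\pi_i\models\varphi$; Boolean connectives as usual; $\mathcal K,\pi,i\models\mathsf X\psi$ iff $\mathcal K,\pi,i+1\models\psi$; $\mathcal K,\pi,i\models\psi_1\mathsf U\psi_2$ iff there is $k\ge0$ with $\mathcal K,\pi,i+k\models\psi_2$ and $\mathcal K,\pi,i+j\models\psi_1$ for all $0\le j<k$. $\mathcal K\models\varphi$ iff $\mathcal K,w_I\models\varphi$. A relation $B\subseteq W_1\times W_2$ is a cycle-bisimulation relation between $\mathcal K_1$ and $\mathcal K_2$ if $(w_{I,1},w_{I,2})\in B$ and for all $(w_1,w_2)\in B$: (a) $L_1(w_1)=L_2(w_2)$; (b) for every $v_1$ with $(w_1,v_1)\in R_1$ there is $v_2$ with $(w_2,v_2)\in R_2$ and $(v_1,v_2)\in B$; (c) for every $v_2$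 with $(w_2,v_2)\in R_2$ there is $v_1$ with $(w_1,v_1)\in R_1$ and $(v_1,v_2)\in B$; (d) for every cycle $\pi_1$ of $\mathcal K_1$ with first world $w_1$ there is a cycle $\pi_2$ of $\mathcal K_2$ with first world $w_2$ such that $((\pi_1)_i,(\pi_2)_i)\in B$ for all $i\in\mathbb N$; (e) for every cycle $\pi_2$ of $\mathcal K_2$ with first world $w_2$ there is a cycle $\pi_1$ of $\mathcal K_1$ with first world $w_1$ such that $((\pi_1)_i,(\pi_2)_i)\in B$ for all $i\in\mathbb N$. *)

theory Defs
  imports Main "HOL-Library.Countable_Set"
begin

record ('ap, 'w) kripke =
  kAP :: "'ap set"
  kW  :: "'w set"
  kR  :: "('w \<times> 'w) set"
  kL  :: "'w \<Rightarrow> 'ap set"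
  kI  :: "'w"

definition kripke_wf :: "('ap, 'w) kripke \<Rightarrow> bool" where
  "kripke_wf K \<longleftrightarrow>
     finite (kAP K) \<and> countable (kW K) \<and> kW K \<noteq> {} \<and> kI K \<in> kW K \<and>
     kR K \<subseteq> kW K \<times> kW K \<and>
     (\<forall>w\<in>kW K. \<exists>v. (w, v) \<in> kR K) \<and>
     (\<forall>w\<in>kW K. kL K w \<subseteq> kAP K)"

definition is_path :: "('ap, 'w) kripke \<Rightarrow> (nat \<Rightarrow> 'w) \<Rightarrow> bool" where
  "is_path K \<pi> \<longleftrightarrow> (\<forall>i. (\<pi> i, \<pi> (Suc i)) \<in> kR K)"

definition Pth :: "('ap, 'w) kripke \<Rightarrow> 'w \<Rightarrow> (nat \<Rightarrow> 'w) set" where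
  "Pth K w = {\<pi>. is_path K \<pi> \<and> \<pi> 0 = w}"

definition is_cycle :: "('ap, 'w) kripke \<Rightarrow> (nat \<Rightarrow> 'w) \<Rightarrow> bool" where
  "is_cycle K \<pi> \<longleftrightarrow> is_path K \<pi> \<and> (\<forall>i. \<exists>j>i. \<pi> j = \<pi> 0)"

definition Cyc :: "('ap, 'w) kripke \<Rightarrow> 'w \<Rightarrow> (nat \<Rightarrow> 'w) set" where
  "Cyc K w = {\<pi>. is_cycle K \<pi> \<and> \<pi> 0 = w}"

datatype 'ap sform =
    Prop 'ap
  | SNot "'ap sform"
  | SAnd "'ap sform" "'ap sform"
  | SOr "'ap sform" "'ap sform"
  | SE "'ap pform"
  | SA "'ap pform"
  | SEc "'ap pform"
  | SAc "'ap pform"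
and 'ap pform =
    PState "'ap sform"
  | PNot "'ap pform"
  | PAnd "'ap pform" "'ap pform"
  | POr "'ap pform" "'ap pform"
  | PX "'ap pform"
  | PU "'ap pform" "'ap pform"

fun sat_s :: "('ap, 'w) kripke \<Rightarrow> 'w \<Rightarrow> 'ap sform \<Rightarrow> bool"
and sat_p :: "('ap, 'w) kripke \<Rightarrow> (nat \<Rightarrow> 'w) \<Rightarrow> nat \<Rightarrow> 'ap pform \<Rightarrow> bool" where
  "sat_s K w (Prop p) = (p \<in> kL K w)"
| "sat_s K w (SNot f) = (\<not> sat_s K w f)"
| "sat_s K w (SAnd f g) = (sat_s K w f \<and> sat_s K w g)"
| "sat_s K w (SOr f g) = (sat_s K w f \<or> sat_s K w g)"
| "sat_s K w (SE \<psi>) = (\<exists>\<pi>\<in>Pth K w. sat_p K \<pi> 0 \<psi>)"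
| "sat_s K w (SA \<psi>) = (\<forall>\<pi>\<in>Pth K w. sat_p K \<pi> 0 \<psi>)"
| "sat_s K w (SEc \<psi>) = (\<exists>\<pi>\<in>Cyc K w. sat_p K \<pi> 0 \<psi>)"
| "sat_s K w (SAc \<psi>) = (\<forall>\<pi>\<in>Cyc K w. sat_p K \<pi> 0 \<psi>)"
| "sat_p K \<pi> i (PState f) = sat_s K (\<pi> i) f"
| "sat_p K \<pi> i (PNot \<psi>) = (\<not> sat_p K \<pi> i \<psi>)"
| "sat_p K \<pi> i (PAnd \<psi> \<chi>) = (sat_p K \<pi> i \<psi> \<and> sat_p K \<pi> i \<chi>)"
| "sat_p K \<pi> i (POr \<psi> \<chi>) = (sat_p K \<pi> i \<psi> \<or> sat_p K \<pi> i \<chi>)"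
| "sat_p K \<pi> i (PX \<psi>) = sat_p K \<pi> (Suc i) \<psi>"
| "sat_p K \<pi> i (PU \<psi> \<chi>) =
     (\<exists>k. sat_p K \<pi> (i + k) \<chi> \<and> (\<forall>j<k. sat_p K \<pi> (i + j) \<psi>))"

definition models :: "('ap, 'w) kripke \<Rightarrow> 'ap sform \<Rightarrow> bool" where
  "models K \<phi> \<longleftrightarrow> sat_s K (kI K) \<phi>"

definition cycle_bisim ::
  "('ap, 'w1) kripke \<Rightarrow> ('ap, 'w2) kripke \<Rightarrow> ('w1 \<times> 'w2) set \<Rightarrow> bool" where
  "cycle_bisim K1 K2 B \<longleftrightarrow>
     B \<subseteq> kW K1 \<times> kW K2 \<and>
     (kI K1, kI K2) \<in> B \<and>
     (\<forall>(w1, w2)\<in>B.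
        kL K1 w1 = kL K2 w2 \<and>
        (\<forall>v1. (w1, v1) \<in> kR K1 \<longrightarrow> (\<exists>v2. (w2, v2) \<in> kR K2 \<and> (v1, v2) \<in> B)) \<and>
        (\<forall>v2. (w2, v2) \<in> kR K2 \<longrightarrow> (\<exists>v1. (w1, v1) \<in> kR K1 \<and> (v1, v2) \<in> B)) \<and>
        (\<forall>\<pi>1\<in>Cyc K1 w1. \<exists>\<pi>2\<in>Cyc K2 w2. \<forall>i. (\<pi>1 i, \<pi>2 i) \<in> B) \<and>
        (\<forall>\<pi>2\<in>Cyc K2 w2. \<exists>\<pi>1\<in>Cyc K1 w1. \<forall>i. (\<pi>1 i, \<pi>2 i) \<in> B))"

end

theory Submission
  imports Defs
begin

text \<open>
  Cycle-bisimilar worlds satisfy the same formulas, and pointwise related paths satisfy the same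
  path formulas at every position; both claims are proved by one simultaneous induction on the
  formula. The path quantifiers are handled by lifting a path step by step along the forth and back
  conditions, the cycle quantifiers directly by the cycle conditions of the bisimulation.
\<close>

lemma simulation_lifts_path:
  assumes start: "(p 0, b) \<in> B"
    and path: "\<And>n. (p n, p (Suc n)) \<in> R1"
    and forth: "\<And>x y x'. (x, y) \<in> B \<Longrightarrow> (x, x') \<in> R1 \<Longrightarrow> \<exists>y'. (y, y') \<in> R2 \<and> (x', y') \<in> B"
  shows "\<exists>q. q 0 = b \<and> (\<forall>n. (q n, q (Suc n)) \<in> R2) \<and> (\<forall>n. (p n, q n) \<in> B)"
proof -
  define q where "q = rec_nat b (\<lambda>n y. SOME y'. (y, y') \<in> R2 \<and> (p (Suc n), y') \<in> B)"
  have step: "(q n, q (Suc n)) \<in> R2 \<and> (p (Suc n), q (Suc n)) \<in> B" if "(p n, q n) \<in> B" for n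
    using someI_ex[OF forth[OF that path]] by (simp add: q_def)
  have related: "(p n, q n) \<in> B" for n
    by (induction n) (use start step in \<open>simp_all add: q_def\<close>)
  have "q 0 = b"
    by (simp add: q_def)
  with related step show ?thesis
    by blast
qed

lemma cycle_bisim_converse:
  assumes "cycle_bisim K1 K2 B"
  shows "cycle_bisim K2 K1 (B\<inverse>)"
  using assms unfolding cycle_bisim_def
  by (intro conjI ballI; clarify?) (simp_all only: converse_iff; blast)+

context
  fixes K1 :: "('ap, 'w1) kripke" and K2 :: "('ap, 'w2) kripke" and B :: "('w1 \<times> 'w2) set"
  assumes bisim: "cycle_bisim K1 K2 B"
begin

lemma cycle_bisim_label: "(w1, w2) \<in> B \<Longrightarrow> kL K1 w1 = kL K2 w2"
  using bisim unfolding cycle_bisim_def by blast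

lemma cycle_bisim_path_forth:
  assumes "(w1, w2) \<in> B" and "\<pi>1 \<in> Pth K1 w1"
  shows "\<exists>\<pi>2\<in>Pth K2 w2. \<forall>i. (\<pi>1 i, \<pi>2 i) \<in> B"
proof -
  have "\<exists>y'. (y, y') \<in> kR K2 \<and> (x', y') \<in> B" if "(x, y) \<in> B" "(x, x') \<in> kR K1" for x y x'
    using bisim that unfolding cycle_bisim_def by blast
  with assms simulation_lifts_path[of \<pi>1 w2 B "kR K1" "kR K2"]
  show ?thesis unfolding Pth_def is_path_def by auto
qed

lemma cycle_bisim_cycle_forth:
  "(w1, w2) \<in> B \<Longrightarrow> \<pi>1 \<in> Cyc K1 w1 \<Longrightarrow> \<exists>\<pi>2\<in>Cyc K2 w2. \<forall>i. (\<pi>1 i, \<pi>2 i) \<in> B"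
  using bisim unfolding cycle_bisim_def by blast

end

lemma cycle_bisim_path_back:
  assumes "cycle_bisim K1 K2 B" and "(w1, w2) \<in> B" and "\<pi>2 \<in> Pth K2 w2"
  shows "\<exists>\<pi>1\<in>Pth K1 w1. \<forall>i. (\<pi>1 i, \<pi>2 i) \<in> B"
  using cycle_bisim_path_forth[OF cycle_bisim_converse[OF assms(1)]] assms(2,3) by auto

lemma cycle_bisim_cycle_back:
  assumes "cycle_bisim K1 K2 B" and "(w1, w2) \<in> B" and "\<pi>2 \<in> Cyc K2 w2"
  shows "\<exists>\<pi>1\<in>Cyc K1 w1. \<forall>i. (\<pi>1 i, \<pi>2 i) \<in> B"
  using cycle_bisim_cycle_forth[OF cycle_bisim_converse[OF assms(1)]] assms(2,3) by auto

lemma pointwise_related_quantifiers_agree: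
  assumes lifts_forth: "\<forall>\<pi>1\<in>P1. \<exists>\<pi>2\<in>P2. \<forall>i. (\<pi>1 i, \<pi>2 i) \<in> B"
    and lifts_back: "\<forall>\<pi>2\<in>P2. \<exists>\<pi>1\<in>P1. \<forall>i. (\<pi>1 i, \<pi>2 i) \<in> B"
    and agree: "\<And>\<pi>1 \<pi>2. \<forall>i. (\<pi>1 i, \<pi>2 i) \<in> B \<Longrightarrow> Q1 \<pi>1 \<longleftrightarrow> Q2 \<pi>2"
  shows "(\<exists>\<pi>\<in>P1. Q1 \<pi>) \<longleftrightarrow> (\<exists>\<pi>\<in>P2. Q2 \<pi>)"
    and "(\<forall>\<pi>\<in>P1. Q1 \<pi>) \<longleftrightarrow> (\<forall>\<pi>\<in>P2. Q2 \<pi>)"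
  using lifts_forth lifts_back agree by blast+

lemma cycle_bisim_sat_invariant:
  assumes bisim: "cycle_bisim K1 K2 B"
  shows "\<forall>w1 w2. (w1, w2) \<in> B \<longrightarrow> (sat_s K1 w1 \<phi> \<longleftrightarrow> sat_s K2 w2 \<phi>)"
    and "\<forall>\<pi>1 \<pi>2. (\<forall>i. (\<pi>1 i, \<pi>2 i) \<in> B) \<longrightarrow> (\<forall>i. sat_p K1 \<pi>1 i \<psi> \<longleftrightarrow> sat_p K2 \<pi>2 i \<psi>)"
proof (induction \<phi> and \<psi>)
  case (Prop p)
  then show ?case using cycle_bisim_label[OF bisim] by simp
next
  case (SE \<psi>)
  show ?case
    by (clarsimp, rule pointwise_related_quantifiers_agree(1))
      (use SE cycle_bisim_path_forth[OF bisim] cycle_bisim_path_back[OF bisim] in blast)+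
next
  case (SA \<psi>)
  show ?case
    by (clarsimp, rule pointwise_related_quantifiers_agree(2))
      (use SA cycle_bisim_path_forth[OF bisim] cycle_bisim_path_back[OF bisim] in blast)+
next
  case (SEc \<psi>)
  show ?case
    by (clarsimp, rule pointwise_related_quantifiers_agree(1))
      (use SEc cycle_bisim_cycle_forth[OF bisim] cycle_bisim_cycle_back[OF bisim] in blast)+
next
  case (SAc \<psi>)
  show ?case
    by (clarsimp, rule pointwise_related_quantifiers_agree(2))
      (use SAc cycle_bisim_cycle_forth[OF bisim] cycle_bisim_cycle_back[OF bisim] in blast)+
next
  case (PU \<psi> \<chi>)
  then show ?case by simp
qed auto

theorem mainTheorem2:
  fixes K1 :: "('ap, 'w1) kripke" and K2 :: "('ap, 'w2) kripke"
    and B :: "('w1 \<times> 'w2) set"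
  assumes "kripke_wf K1" and "kripke_wf K2" and "kAP K1 = kAP K2"
    and "cycle_bisim K1 K2 B"
  shows "(\<forall>\<phi> w1 w2. (w1, w2) \<in> B \<longrightarrow> (sat_s K1 w1 \<phi> \<longleftrightarrow> sat_s K2 w2 \<phi>))
         \<and> (\<forall>\<phi>. models K1 \<phi> \<longleftrightarrow> models K2 \<phi>)"
proof -
  have "\<forall>\<phi> w1 w2. (w1, w2) \<in> B \<longrightarrow> (sat_s K1 w1 \<phi> \<longleftrightarrow> sat_s K2 w2 \<phi>)"
    using cycle_bisim_sat_invariant(1)[OF assms(4)] by blast
  moreover have "(kI K1, kI K2) \<in> B"
    using assms(4) unfolding cycle_bisim_def by blast
  ultimately show ?thesis unfolding models_def by blast
qed

end
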